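(* Let $\alpha\geq 1$. Then: (1) $S_n$ has the maximum value of $\chi_\alpha$ among all $n$-vertex trees; (2) $S_n^+$ has the maximum value of $\chi_\alpha$ among all $n$-vertex unicyclic graphs; (3) $B_1$ has the maximum value of $\chi_\alpha$ among all $n$-vertex bicyclic graphs; (4) for $n\geq 5$, the maximum value of $\chi_\alpha$ among all $n$-vertex tricyclic graphs is attained by $G_4$ or $G_5$; more precisely, $\chi_\alpha(G_4)<\chi_\alpha(G_5)$ for $1<\alpha<2$, $\chi_\alpha(G_4)>\chi_\alpha(G_5)$ for $\alpha>2$, and $\chi_\alpha(G_4)=\chi_\alpha(G_5)$ for $\alpha\in\{1,2\}$; (5) for $n\geq 6$, $H_4$ has the maximum value of $\chi_\alpha$ among all $n$-vertex tetracyclic graphs, and for $n=5$, $H_5$ has the maximum value of $\chi_\alpha$ among all $5$-vertex tetracyclic graphs.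
   Context: All graphs are finite, simple, undirected and connected. A connected graph with $n$ vertices and $m$ edges is a tree, unicyclic, bicyclic, tricyclic, tetracyclic graph if $m=n-1,n,n+1,n+2,n+3$ respectively. The general sum-connectivity index is $\chi_\alpha(G)=\sum_{uv\in E(G)}(d_u+d_v)^\alpha$, $d_u$ the degree of $u$. $S_n$ is the star on $n$ vertices (one center adjacent to $n-1$ leaves). The following graphs are all obtained from $S_n$ by adding edges between leaves: $S_n^+$: add one edge; $B_1$: add two edges sharing a common leaf (i.e. a path $v_1v_2v_3$ on three leaves); $G_4$: join one leaf to three other leaves (requires $n\ge5$); $G_5$: add the three edges of a triangle on three leaves; $H_4$: join one leaf to four other leaves (requires $n\ge 6$); $H_5$: add on four leaves $v_1,v_2,v_3,v_4$ the edges $v_1v_2,v_2v_3,v_3v_1,v_1v_4$ (a triangle with a pendant edge). Statements (1)–(3) are for those $n$ for which the respective graphs exist. *)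

theory Defs
  imports Complex_Main
begin

definition simple_graph :: "nat \<Rightarrow> nat set set \<Rightarrow> bool" where
  "simple_graph n E \<longleftrightarrow> (\<forall>e\<in>E. \<exists>u v. e = {u, v} \<and> u \<noteq> v \<and> u < n \<and> v < n)"

definition adj_rel :: "nat set set \<Rightarrow> (nat \<times> nat) set" where
  "adj_rel E = {(u, v). {u, v} \<in> E}"

definition connected_graph :: "nat \<Rightarrow> nat set set \<Rightarrow> bool" where
  "connected_graph n E \<longleftrightarrow> (\<forall>u<n. \<forall>v<n. (u, v) \<in> (adj_rel E)\<^sup>*)"

definition conn_k_cyclic :: "nat \<Rightarrow> nat \<Rightarrow> nat set set \<Rightarrow> bool" where
  "conn_k_cyclic k n E \<longleftrightarrow> simple_graph n E \<and> connected_graph n E \<and> card E + 1 = n + k"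

abbreviation "is_tree \<equiv> conn_k_cyclic 0"
abbreviation "unicyclic \<equiv> conn_k_cyclic 1"
abbreviation "bicyclic \<equiv> conn_k_cyclic 2"
abbreviation "tricyclic \<equiv> conn_k_cyclic 3"
abbreviation "tetracyclic \<equiv> conn_k_cyclic 4"

definition deg :: "nat set set \<Rightarrow> nat \<Rightarrow> nat" where
  "deg E v = card {e \<in> E. v \<in> e}"

definition chi :: "real \<Rightarrow> nat set set \<Rightarrow> real" where
  "chi \<alpha> E = (\<Sum>e\<in>E. (real (\<Sum>v\<in>e. deg E v)) powr \<alpha>)"

definition is_max :: "real \<Rightarrow> (nat set set \<Rightarrow> bool) \<Rightarrow> nat set set \<Rightarrow> bool" where
  "is_max \<alpha> P E \<longleftrightarrow> P E \<and> (\<forall>E'. P E' \<longrightarrow> chi \<alpha> E' \<le> chi \<alpha> E)"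

definition star :: "nat \<Rightarrow> nat set set" where
  "star n = {{0, i} | i. 0 < i \<and> i < n}"

definition star_plus :: "nat \<Rightarrow> nat set set" where
  "star_plus n = star n \<union> {{1, 2}}"

definition B1 :: "nat \<Rightarrow> nat set set" where
  "B1 n = star n \<union> {{1, 2}, {2, 3}}"

definition G4 :: "nat \<Rightarrow> nat set set" where
  "G4 n = star n \<union> {{1, 2}, {1, 3}, {1, 4}}"

definition G5 :: "nat \<Rightarrow> nat set set" where
  "G5 n = star n \<union> {{1, 2}, {2, 3}, {3, 1}}"

definition H4 :: "nat \<Rightarrow> nat set set" where
  "H4 n = star n \<union> {{1, 2}, {1, 3}, {1, 4}, {1, 5}}"

definition H5 :: "nat \<Rightarrow> nat set set" where
  "H5 n = star n \<union> {{1, 2}, {2, 3}, {3, 1}, {1, 4}}"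

end

(* If alpha >= 1, Kelmans' operation (moving to w those neighbours of y that are not adjacent to w)
   does not decrease chi_alpha, by convexity of x powr alpha; iterating it at vertex 0 turns every
   connected graph with n vertices and n - 1 + k edges into star n \<union> H for a graph H with k edges
   among the leaves.  For such graphs
     chi_alpha = (n - 1) n^alpha + sum_j L_j D_j + sum_{uv in H} (d_u + d_v + 2)^alpha,
   where L_j is the number of leaves of degree > j in H and D_j = (n+j+1)^alpha - (n+j)^alpha.
   For k <= 4 the constraints sum_j L_j = 2k and d_u + d_v <= k + 1 admit only a few profiles L,
   and comparing them needs only that D_j increases, the estimate 2 D_1 <= D_0 + D_3 for n >= 4,
   and the sign of the third difference D_0 - 2 D_1 + D_2, which is that of
   alpha (alpha - 1) (alpha - 2).  Only for n = 5 the last sum needs more than the bound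
   d_u + d_v <= k + 1: there at most two edges of H join a vertex of degree 3 to one of degree 2. *)

theory Submission
  imports Defs "HOL-Analysis.Convex"
begin

section \<open>Powers and their finite differences\<close>

definition pw :: "real \<Rightarrow> nat \<Rightarrow> real" where
  "pw \<alpha> m = real m powr \<alpha>"

definition dpw :: "real \<Rightarrow> nat \<Rightarrow> real" where
  "dpw \<alpha> m = pw \<alpha> (Suc m) - pw \<alpha> m"

lemma pw_mono: "0 \<le> \<alpha> \<Longrightarrow> m \<le> m' \<Longrightarrow> pw \<alpha> m \<le> pw \<alpha> m'"
  unfolding pw_def by (intro powr_mono2) auto

lemma pw_add_pw_le_spread:
  assumes \<alpha>: "1 \<le> \<alpha>" and pos: "0 < b'" and sum: "a + b = a' + b'" and "a \<le> a'" "b \<le> a'"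
  shows "pw \<alpha> a + pw \<alpha> b \<le> pw \<alpha> a' + pw \<alpha> b'"
proof (cases "a' = b'")
  case True
  then have "a = a'" "b = a'" using sum \<open>a \<le> a'\<close> \<open>b \<le> a'\<close> by linarith+
  then show ?thesis using True by simp
next
  case False
  have convex: "convex_on {0<..} (\<lambda>x::real. x powr \<alpha>)" using powr_convex \<alpha> by auto
  have "b' < a'" "b' \<le> a" using sum \<open>a \<le> a'\<close> \<open>b \<le> a'\<close> False by linarith+
  define t where "t = (real a - real b') / (real a' - real b')"
  have t: "0 \<le> t" "t \<le> 1" using \<open>b' < a'\<close> \<open>b' \<le> a\<close> \<open>a \<le> a'\<close> by (auto simp: t_def field_simps)
  have "t * (real a' - real b') = real a - real b'"
    using \<open>b' < a'\<close> by (simp add: t_def)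
  then have a: "real a = (1 - t) * real b' + t * real a'"
    by (simp add: algebra_simps)
  have b: "real b = (1 - (1 - t)) * real b' + (1 - t) * real a'"
    using a sum by (simp add: algebra_simps flip: of_nat_add)
  have "real a powr \<alpha> \<le> (1 - t) * real b' powr \<alpha> + t * real a' powr \<alpha>"
    using convex_onD[OF convex, of t "real b'" "real a'"] t pos \<open>b' < a'\<close> a by simp
  moreover have "real b powr \<alpha> \<le> (1 - (1 - t)) * real b' powr \<alpha> + (1 - t) * real a' powr \<alpha>"
    using convex_onD[OF convex, of "1 - t" "real b'" "real a'"] t pos \<open>b' < a'\<close> b by simp
  ultimately show ?thesis unfolding pw_def by (simp add: algebra_simps)
qed

lemma dpw_mono:
  assumes "1 \<le> \<alpha>" "0 < m" "m \<le> m'"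
  shows "dpw \<alpha> m \<le> dpw \<alpha> m'"
  using \<open>m \<le> m'\<close>
proof (induction rule: dec_induct)
  case (step k)
  have "dpw \<alpha> k \<le> dpw \<alpha> (Suc k)"
    using pw_add_pw_le_spread[OF \<open>1 \<le> \<alpha>\<close>, of k "Suc k" "Suc k" "Suc (Suc k)"] step.hyps \<open>0 < m\<close>
    by (simp add: dpw_def)
  then show ?case using step.IH by simp
qed simp

lemma pw_sum_exchange_le:
  fixes g :: "'a \<Rightarrow> nat"
  assumes "1 \<le> \<alpha>" "finite A" "C \<subseteq> A" "0 < b'" "a + b = a' + b'" "a \<le> a'" "b \<le> a'"
  shows "(\<Sum>u\<in>A. pw \<alpha> (a + g u)) + (\<Sum>u\<in>C. pw \<alpha> (b + g u))
    \<le> (\<Sum>u\<in>A. pw \<alpha> (a' + g u)) + (\<Sum>u\<in>C. pw \<alpha> (b' + g u))"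
proof -
  have "(\<Sum>u\<in>A - C. pw \<alpha> (a + g u)) \<le> (\<Sum>u\<in>A - C. pw \<alpha> (a' + g u))"
    using assms by (intro sum_mono pw_mono) auto
  moreover have "(\<Sum>u\<in>C. pw \<alpha> (a + g u) + pw \<alpha> (b + g u)) \<le> (\<Sum>u\<in>C. pw \<alpha> (a' + g u) + pw \<alpha> (b' + g u))"
    using assms by (intro sum_mono pw_add_pw_le_spread) auto
  moreover have "(\<Sum>u\<in>A. h u) = (\<Sum>u\<in>A - C. h u) + (\<Sum>u\<in>C. h u)" for h :: "'a \<Rightarrow> real"
    using assms by (metis add.commute sum.subset_diff)
  ultimately show ?thesis by (simp add: sum.distrib)
qed

lemma unit_mvt:
  fixes g g' :: "real \<Rightarrow> real"
  assumes "\<And>s. 0 < s \<Longrightarrow> (g has_real_derivative g' s) (at s)" "0 < x"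
  shows "\<exists>\<xi>. x < \<xi> \<and> \<xi> < x + 1 \<and> g (x + 1) - g x = g' \<xi>"
  using MVT2[of x "x + 1" g g'] assms by auto

lemma unit_difference_has_derivative:
  fixes g g' :: "real \<Rightarrow> real"
  assumes "\<And>s. 0 < s \<Longrightarrow> (g has_real_derivative g' s) (at s)" "0 < s"
  shows "((\<lambda>t. g (t + 1) - g t) has_real_derivative g' (s + 1) - g' s) (at s)"
  using assms DERIV_shift[of g "g' (s + 1)" s 1] by (intro DERIV_diff) auto

lemma second_difference_eq_deriv:
  fixes g g' g'' :: "real \<Rightarrow> real"
  assumes dg: "\<And>s. 0 < s \<Longrightarrow> (g has_real_derivative g' s) (at s)"
    and dg': "\<And>s. 0 < s \<Longrightarrow> (g' has_real_derivative g'' s) (at s)"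
    and "0 < x"
  shows "\<exists>\<xi>. x < \<xi> \<and> \<xi> < x + 2 \<and> g (x + 2) - 2 * g (x + 1) + g x = g'' \<xi>"
proof -
  obtain \<xi> where \<xi>: "x < \<xi>" "\<xi> < x + 1"
    "(g (x + 1 + 1) - g (x + 1)) - (g (x + 1) - g x) = g' (\<xi> + 1) - g' \<xi>"
    using unit_mvt[OF unit_difference_has_derivative[OF dg] \<open>0 < x\<close>] by auto
  obtain \<eta> where "\<xi> < \<eta>" "\<eta> < \<xi> + 1" "g' (\<xi> + 1) - g' \<xi> = g'' \<eta>"
    using unit_mvt[of g' g'' \<xi>] dg' \<xi> \<open>0 < x\<close> by force
  then show ?thesis using \<xi> by (intro exI[of _ \<eta>]) (auto simp: algebra_simps)
qed

lemma third_difference_eq_deriv: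
  fixes g g' g'' g''' :: "real \<Rightarrow> real"
  assumes dg: "\<And>s. 0 < s \<Longrightarrow> (g has_real_derivative g' s) (at s)"
    and dg': "\<And>s. 0 < s \<Longrightarrow> (g' has_real_derivative g'' s) (at s)"
    and dg'': "\<And>s. 0 < s \<Longrightarrow> (g'' has_real_derivative g''' s) (at s)"
    and "0 < x"
  shows "\<exists>\<xi>. x < \<xi> \<and> g (x + 3) - 3 * g (x + 2) + 3 * g (x + 1) - g x = g''' \<xi>"
proof -
  obtain \<xi> where \<xi>: "x < \<xi>" "g (x + 2 + 1) - g (x + 2) - 2 * (g (x + 1 + 1) - g (x + 1))
      + (g (x + 1) - g x) = g'' (\<xi> + 1) - g'' \<xi>"
    using second_difference_eq_deriv[OF unit_difference_has_derivative[OF dg]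
        unit_difference_has_derivative[OF dg'] \<open>0 < x\<close>] by auto
  obtain \<eta> where "\<xi> < \<eta>" "g'' (\<xi> + 1) - g'' \<xi> = g''' \<eta>"
    using unit_mvt[of g'' g''' \<xi>] dg'' \<xi> \<open>0 < x\<close> by force
  then show ?thesis using \<xi> by (intro exI[of _ \<eta>]) (auto simp: algebra_simps)
qed

lemma scaled_powr_has_real_derivative:
  "0 < s \<Longrightarrow> ((\<lambda>x. c * x powr p) has_real_derivative c * p * s powr (p - 1)) (at s)"
  using DERIV_cmult[OF has_real_derivative_powr[of s p], of c] by (simp add: mult.assoc)

lemma powr_second_difference:
  fixes y \<alpha> :: real
  assumes "0 < y"
  shows "\<exists>z. y < z \<and> z < y + 2 \<and>
    (y + 2) powr \<alpha> - 2 * (y + 1) powr \<alpha> + y powr \<alpha> = \<alpha> * (\<alpha> - 1) * z powr (\<alpha> - 2)"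
proof -
  have d2: "((\<lambda>t. \<alpha> * t powr (\<alpha> - 1)) has_real_derivative \<alpha> * (\<alpha> - 1) * s powr (\<alpha> - 2)) (at s)"
    if "0 < s" for s
    using scaled_powr_has_real_derivative[OF that, of \<alpha> "\<alpha> - 1"] by (simp add: mult.assoc)
  show ?thesis using second_difference_eq_deriv[OF has_real_derivative_powr d2 assms] by simp
qed

lemma powr_third_difference:
  fixes y \<alpha> :: real
  assumes "0 < y"
  shows "\<exists>z. y < z \<and> (y + 3) powr \<alpha> - 3 * (y + 2) powr \<alpha> + 3 * (y + 1) powr \<alpha> - y powr \<alpha>
    = \<alpha> * (\<alpha> - 1) * (\<alpha> - 2) * z powr (\<alpha> - 3)"
proof -
  have d2: "((\<lambda>t. \<alpha> * t powr (\<alpha> - 1)) has_real_derivative \<alpha> * (\<alpha> - 1) * s powr (\<alpha> - 2)) (at s)"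
    and d3: "((\<lambda>t. \<alpha> * (\<alpha> - 1) * t powr (\<alpha> - 2))
      has_real_derivative \<alpha> * (\<alpha> - 1) * (\<alpha> - 2) * s powr (\<alpha> - 3)) (at s)"
    if "0 < s" for s
    using scaled_powr_has_real_derivative[OF that, of \<alpha> "\<alpha> - 1"]
      scaled_powr_has_real_derivative[OF that, of "\<alpha> * (\<alpha> - 1)" "\<alpha> - 2"] by (simp_all add: mult.assoc)
  show ?thesis using third_difference_eq_deriv[OF has_real_derivative_powr d2 d3 assms] by simp
qed

lemma powr_le_add_powr_shifted:
  fixes x z0 z1 z2 p :: real
  assumes "-1 \<le> p" "4 \<le> x" "x < z0" "z0 < x + 2" "x + 1 < z1" "x + 2 < z2" "z1 < x + 4" "z2 < x + 4"
  shows "z0 powr p \<le> z1 powr p + z2 powr p"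
proof (cases "0 \<le> p")
  case True
  then have "z0 powr p \<le> z2 powr p" using assms by (intro powr_mono2) auto
  then show ?thesis by (simp add: add_increasing)
next
  case False
  \<comment> \<open>For negative p the power drops by at most the factor 2 powr p \<ge> 1/2 on [x, 2x] \<supseteq> [x, x + 4].\<close>
  have "1 \<le> 2 * (2::real) powr p" using powr_mono[of "-1" p 2] assms by (simp add: powr_minus)
  then have "1 * x powr p \<le> (2 * 2 powr p) * x powr p" by (intro mult_right_mono) auto
  also have "\<dots> = 2 * (2 * x) powr p" using assms by (simp add: powr_mult)
  also have "\<dots> \<le> 2 * (x + 4) powr p" using False assms by (auto intro!: powr_mono2')
  finally have "z0 powr p \<le> 2 * (x + 4) powr p"
    using powr_mono2'[of p x z0] False assms by simp
  moreover have "(x + 4) powr p \<le> z1 powr p" "(x + 4) powr p \<le> z2 powr p"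
    using False assms by (auto intro!: powr_mono2')
  ultimately show ?thesis by linarith
qed

lemma dpw_midpoint:
  assumes "1 \<le> \<alpha>" "4 \<le> m"
  shows "2 * dpw \<alpha> (m + 1) \<le> dpw \<alpha> m + dpw \<alpha> (m + 3)"
proof -
  define x where "x = real m"
  have "4 \<le> x" using assms by (simp add: x_def)
  obtain z0 where z0: "x < z0" "z0 < x + 2"
      "(x + 2) powr \<alpha> - 2 * (x + 1) powr \<alpha> + x powr \<alpha> = \<alpha> * (\<alpha> - 1) * z0 powr (\<alpha> - 2)"
    using powr_second_difference[of x \<alpha>] \<open>4 \<le> x\<close> by auto
  obtain z1 where z1: "x + 1 < z1" "z1 < x + 3"
      "(x + 3) powr \<alpha> - 2 * (x + 2) powr \<alpha> + (x + 1) powr \<alpha> = \<alpha> * (\<alpha> - 1) * z1 powr (\<alpha> - 2)"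
    using powr_second_difference[of "x + 1" \<alpha>] \<open>4 \<le> x\<close> by (auto simp: add.assoc)
  obtain z2 where z2: "x + 2 < z2" "z2 < x + 4"
      "(x + 4) powr \<alpha> - 2 * (x + 3) powr \<alpha> + (x + 2) powr \<alpha> = \<alpha> * (\<alpha> - 1) * z2 powr (\<alpha> - 2)"
    using powr_second_difference[of "x + 2" \<alpha>] \<open>4 \<le> x\<close> by (auto simp: add.assoc)
  have "z0 powr (\<alpha> - 2) \<le> z1 powr (\<alpha> - 2) + z2 powr (\<alpha> - 2)"
    using assms \<open>4 \<le> x\<close> z0 z1 z2 by (intro powr_le_add_powr_shifted) auto
  then have "\<alpha> * (\<alpha> - 1) * z0 powr (\<alpha> - 2) \<le> \<alpha> * (\<alpha> - 1) * z1 powr (\<alpha> - 2) + \<alpha> * (\<alpha> - 1) * z2 powr (\<alpha> - 2)"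
    using assms by (simp add: distrib_left[symmetric] mult_left_mono)
  moreover have "dpw \<alpha> (m + k) = (x + real k + 1) powr \<alpha> - (x + real k) powr \<alpha>" for k
    by (simp add: dpw_def pw_def x_def add_ac)
  from this[of 0] this[of 1] this[of 3] have "dpw \<alpha> m = (x + 1) powr \<alpha> - x powr \<alpha>"
    "dpw \<alpha> (m + 1) = (x + 2) powr \<alpha> - (x + 1) powr \<alpha>" "dpw \<alpha> (m + 3) = (x + 4) powr \<alpha> - (x + 3) powr \<alpha>"
    by (simp_all add: add_ac)
  ultimately show ?thesis using z0(3) z1(3) z2(3) by linarith
qed

lemma dpw_third_difference:
  assumes "0 < m"
  obtains z where "0 < z"
    "dpw \<alpha> m - 2 * dpw \<alpha> (m + 1) + dpw \<alpha> (m + 2) = \<alpha> * (\<alpha> - 1) * (\<alpha> - 2) * z powr (\<alpha> - 3)"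
proof -
  obtain z where "real m < z" and z: "(real m + 3) powr \<alpha> - 3 * (real m + 2) powr \<alpha>
      + 3 * (real m + 1) powr \<alpha> - real m powr \<alpha> = \<alpha> * (\<alpha> - 1) * (\<alpha> - 2) * z powr (\<alpha> - 3)"
    using powr_third_difference[of "real m" \<alpha>] assms by auto
  moreover have "dpw \<alpha> (m + k) = (real m + real k + 1) powr \<alpha> - (real m + real k) powr \<alpha>" for k
    by (simp add: dpw_def pw_def add_ac)
  from this[of 0] this[of 1] this[of 2] have "dpw \<alpha> m = (real m + 1) powr \<alpha> - real m powr \<alpha>"
    "dpw \<alpha> (m + 1) = (real m + 2) powr \<alpha> - (real m + 1) powr \<alpha>"
    "dpw \<alpha> (m + 2) = (real m + 3) powr \<alpha> - (real m + 2) powr \<alpha>"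
    by (simp_all add: add_ac)
  ultimately show ?thesis using that[of z] by (simp add: algebra_simps)
qed

section \<open>Simple graphs\<close>

lemma simple_graph_edgeE:
  assumes "simple_graph n E" "e \<in> E"
  obtains u v where "e = {u, v}" "u \<noteq> v" "u < n" "v < n"
  using assms unfolding simple_graph_def by blast

lemma simple_graph_finite: "simple_graph n E \<Longrightarrow> finite E"
  unfolding simple_graph_def
  by (rule finite_subset[of _ "Pow {..<n}"]) auto

lemma simple_graph_subset: "simple_graph n E \<Longrightarrow> F \<subseteq> E \<Longrightarrow> simple_graph n F"
  unfolding simple_graph_def by blast

lemma simple_graph_Un: "simple_graph n E \<Longrightarrow> simple_graph n F \<Longrightarrow> simple_graph n (E \<union> F)"
  unfolding simple_graph_def by blast

definition nbr :: "nat set set \<Rightarrow> nat \<Rightarrow> nat set" where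
  "nbr E v = {u. {v, u} \<in> E}"

lemma nbr_subset: "simple_graph n E \<Longrightarrow> nbr E v \<subseteq> {..<n}"
  by (auto simp: nbr_def simple_graph_def doubleton_eq_iff)

lemma finite_nbr: "simple_graph n E \<Longrightarrow> finite (nbr E v)"
  using finite_subset[OF nbr_subset] by blast

lemma self_notin_nbr: "simple_graph n E \<Longrightarrow> v \<notin> nbr E v"
  by (auto simp: nbr_def simple_graph_def doubleton_eq_iff)

lemma nbr_neq: "simple_graph n E \<Longrightarrow> u \<in> nbr E v \<Longrightarrow> v \<noteq> u"
  using self_notin_nbr by blast

lemma inj_on_doubleton: "inj_on (\<lambda>u. {v, u}) A"
  by (auto simp: inj_on_def doubleton_eq_iff)

lemma edges_at_eq_image_nbr:
  assumes "simple_graph n E"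
  shows "{e \<in> E. v \<in> e} = (\<lambda>u. {v, u}) ` nbr E v"
proof (intro equalityI subsetI)
  fix e assume e: "e \<in> {e \<in> E. v \<in> e}"
  then obtain a b where "e = {a, b}" using simple_graph_edgeE[OF assms] by blast
  with e have "e = {v, if a = v then b else a}" by auto
  with e show "e \<in> (\<lambda>u. {v, u}) ` nbr E v" by (auto simp: nbr_def)
qed (auto simp: nbr_def)

lemma deg_eq_card_nbr: "simple_graph n E \<Longrightarrow> deg E v = card (nbr E v)"
  unfolding deg_def by (simp add: edges_at_eq_image_nbr card_image[OF inj_on_doubleton])

lemma deg_le_card: "finite E \<Longrightarrow> deg E v \<le> card E"
  unfolding deg_def by (intro card_mono) auto

lemma sum_deg_eq_twice_card:
  assumes "simple_graph n E"
  shows "(\<Sum>v<n. deg E v) = 2 * card E"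
proof -
  have fin: "finite E" using simple_graph_finite[OF assms] .
  have "(\<Sum>v<n. deg E v) = (\<Sum>v<n. \<Sum>e\<in>E. if v \<in> e then 1 else 0)"
    unfolding deg_def using fin by (simp add: sum.If_cases Int_def)
  also have "\<dots> = (\<Sum>e\<in>E. \<Sum>v<n. if v \<in> e then 1 else 0)"
    by (rule sum.swap)
  also have "\<dots> = (\<Sum>e\<in>E. 2)"
  proof (intro sum.cong refl)
    fix e assume "e \<in> E"
    then obtain u v where "e = {u, v}" "u \<noteq> v" "u < n" "v < n"
      using simple_graph_edgeE[OF assms] by blast
    then have "{..<n} \<inter> {v. v \<in> e} = e" by auto
    then show "(\<Sum>v<n. if v \<in> e then 1 else 0) = (2::nat)"
      using \<open>e = {u, v}\<close> \<open>u \<noteq> v\<close> by (simp add: sum.If_cases)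
  qed
  finally show ?thesis by simp
qed

lemma deg_add_deg_le:
  assumes "simple_graph n E" "u \<noteq> v"
  shows "deg E u + deg E v \<le> card E + 1"
proof -
  let ?U = "{e \<in> E. u \<in> e}" and ?V = "{e \<in> E. v \<in> e}"
  have fin: "finite E" using simple_graph_finite[OF assms(1)] .
  have "?U \<inter> ?V \<subseteq> {{u, v}}"
  proof
    fix e assume e: "e \<in> ?U \<inter> ?V"
    then obtain a b where "e = {a, b}" using simple_graph_edgeE[OF assms(1)] by blast
    with e assms(2) show "e \<in> {{u, v}}" by auto
  qed
  then have "card (?U \<inter> ?V) \<le> 1"
    using card_mono[of "{{u, v}}"] by fastforce
  moreover have "card (?U \<union> ?V) \<le> card E" using fin by (intro card_mono) auto
  moreover have "card ?U + card ?V = card (?U \<union> ?V) + card (?U \<inter> ?V)"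
    using fin by (intro card_Un_Int) auto
  ultimately show ?thesis unfolding deg_def by linarith
qed

lemma connected_graph_if_dominating:
  assumes "w < n" "\<forall>v<n. v \<noteq> w \<longrightarrow> {w, v} \<in> E"
  shows "connected_graph n E"
proof -
  have "(w, v) \<in> adj_rel E" "(v, w) \<in> adj_rel E" if "v < n" "v \<noteq> w" for v
    using assms that by (auto simp: adj_rel_def insert_commute)
  then have "(w, v) \<in> (adj_rel E)\<^sup>* \<and> (v, w) \<in> (adj_rel E)\<^sup>*" if "v < n" for v
    using that by (cases "v = w") auto
  then show ?thesis
    unfolding connected_graph_def by (meson rtrancl_trans)
qed

lemma connected_graph_exists_private_nbr:
  assumes "connected_graph n E" "w < n" "v < n" "v \<noteq> w" "{w, v} \<notin> E"
  obtains y z where "{w, y} \<in> E" "{y, z} \<in> E" "z \<noteq> w" "{w, z} \<notin> E"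
proof -
  let ?P = "\<exists>y z. {w, y} \<in> E \<and> {y, z} \<in> E \<and> z \<noteq> w \<and> {w, z} \<notin> E"
  have "(w, v) \<in> (adj_rel E)\<^sup>*" using assms unfolding connected_graph_def by auto
  then have "v = w \<or> {w, v} \<in> E \<or> ?P"
  proof (induction rule: rtrancl_induct)
    case (step a b)
    then have "{a, b} \<in> E" by (simp add: adj_rel_def)
    then show ?case using step.IH by blast
  qed simp
  then show ?thesis using assms that by blast
qed

lemma sum_edges_split_at_edge:
  assumes "simple_graph n E" "{w, y} \<in> E"
  shows "(\<Sum>e\<in>E. F e) = (\<Sum>e\<in>{e \<in> E. w \<notin> e \<and> y \<notin> e}. F e) + F {w, y}
    + (\<Sum>u\<in>nbr E w - {y}. F {w, u}) + (\<Sum>u\<in>nbr E y - {w}. F {y, u})"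
proof -
  have "w \<noteq> y" using assms by (auto elim: simple_graph_edgeE)
  define A where "A = {e \<in> E. w \<notin> e \<and> y \<notin> e}"
  define B where "B = {e \<in> E. w \<in> e}"
  define C where "C = {e \<in> E. y \<in> e \<and> w \<notin> e}"
  have "E = A \<union> (B \<union> C)" "A \<inter> (B \<union> C) = {}" "B \<inter> C = {}"
    unfolding A_def B_def C_def by blast+
  moreover have "finite A" "finite B" "finite C"
    using simple_graph_finite[OF assms(1)] by (simp_all add: A_def B_def C_def)
  ultimately have sum_E: "(\<Sum>e\<in>E. F e) = sum F A + sum F B + sum F C"
    by (simp add: sum.union_disjoint add.assoc)
  have "B = insert {w, y} ((\<lambda>u. {w, u}) ` (nbr E w - {y}))"
    using edges_at_eq_image_nbr[OF assms(1), of w] assms(2) by (auto simp: B_def nbr_def)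
  moreover have "{w, y} \<notin> (\<lambda>u. {w, u}) ` (nbr E w - {y})" by (auto simp: doubleton_eq_iff)
  ultimately have sum_B: "sum F B = F {w, y} + (\<Sum>u\<in>nbr E w - {y}. F {w, u})"
    using finite_nbr[OF assms(1)] by (simp add: sum.reindex[OF inj_on_doubleton, unfolded comp_def])
  have "C = (\<lambda>u. {y, u}) ` (nbr E y - {w})"
    using edges_at_eq_image_nbr[OF assms(1), of y] \<open>w \<noteq> y\<close> by (auto simp: C_def nbr_def)
  then have "sum F C = (\<Sum>u\<in>nbr E y - {w}. F {y, u})"
    by (simp add: sum.reindex[OF inj_on_doubleton, unfolded comp_def])
  with sum_E sum_B show ?thesis by (simp add: A_def add.assoc)
qed

lemma chi_pw: "chi \<alpha> E = (\<Sum>e\<in>E. pw \<alpha> (\<Sum>x\<in>e. deg E x))"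
  by (simp add: chi_def pw_def)

lemma chi_split_at_edge:
  assumes "simple_graph n E" "{w, y} \<in> E"
  shows "chi \<alpha> E = (\<Sum>e\<in>{e \<in> E. w \<notin> e \<and> y \<notin> e}. pw \<alpha> (\<Sum>x\<in>e. deg E x))
    + pw \<alpha> (deg E w + deg E y)
    + (\<Sum>u\<in>nbr E w - {y}. pw \<alpha> (deg E w + deg E u)) + (\<Sum>u\<in>nbr E y - {w}. pw \<alpha> (deg E y + deg E u))"
proof -
  have "w \<noteq> y" using assms by (auto elim: simple_graph_edgeE)
  have "(\<Sum>u\<in>nbr E a - {b}. pw \<alpha> (\<Sum>x\<in>{a, u}. deg E x)) = (\<Sum>u\<in>nbr E a - {b}. pw \<alpha> (deg E a + deg E u))"
    for a b by (intro sum.cong refl) (auto dest: nbr_neq[OF assms(1)])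
  from this[of w y] this[of y w] show ?thesis
    unfolding chi_pw sum_edges_split_at_edge[OF assms] using \<open>w \<noteq> y\<close> by simp
qed

section \<open>Kelmans' operation\<close>

locale kelmans =
  fixes n :: nat and E :: "nat set set" and w y :: nat
  assumes simple: "simple_graph n E" and edge: "{w, y} \<in> E"
begin

definition moved :: "nat set" where
  "moved = nbr E y - insert w (nbr E w)"

definition shifted :: "nat set set" where
  "shifted = (E - (\<lambda>u. {y, u}) ` moved) \<union> (\<lambda>u. {w, u}) ` moved"

lemma w_neq_y: "w \<noteq> y"
  using edge simple by (auto elim: simple_graph_edgeE)

lemma finite_moved: "finite moved"
  unfolding moved_def using finite_nbr[OF simple] by blast

lemma w_notin_moved: "w \<notin> moved" and y_notin_moved: "y \<notin> moved"
  using self_notin_nbr[OF simple, of y] by (auto simp: moved_def)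

lemma movedD:
  assumes "u \<in> moved"
  shows "{y, u} \<in> E" "{w, u} \<notin> E" "u \<noteq> w" "u \<noteq> y" "u < n"
  using assms self_notin_nbr[OF simple, of y] nbr_subset[OF simple, of y]
  by (auto simp: moved_def nbr_def)

lemma card_shifted: "card shifted = card E"
proof -
  have fin: "finite E" using simple_graph_finite[OF simple] .
  have "(\<lambda>u. {y, u}) ` moved \<subseteq> E" "(\<lambda>u. {w, u}) ` moved \<inter> E = {}"
    using movedD by auto
  moreover have "card ((\<lambda>u. {y, u}) ` moved) = card moved" "card ((\<lambda>u. {w, u}) ` moved) = card moved"
    by (simp_all add: card_image[OF inj_on_doubleton])
  moreover have "card ((\<lambda>u. {y, u}) ` moved) \<le> card E"
    using calculation(1) by (intro card_mono fin)
  ultimately show ?thesis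
    unfolding shifted_def using fin finite_moved
    by (subst card_Un_disjoint) (auto simp: card_Diff_subset)
qed

lemma simple_shifted: "simple_graph n shifted"
proof -
  have "w < n" using nbr_subset[OF simple, of y] edge by (auto simp: nbr_def insert_commute)
  then have "simple_graph n ((\<lambda>u. {w, u}) ` moved)"
    unfolding simple_graph_def using movedD by blast
  moreover have "simple_graph n (E - (\<lambda>u. {y, u}) ` moved)"
    by (rule simple_graph_subset[OF simple]) blast
  ultimately show ?thesis
    unfolding shifted_def by (intro simple_graph_Un)
qed

lemma edge_shifted: "{w, y} \<in> shifted"
  using edge w_notin_moved w_neq_y unfolding shifted_def by (auto simp: doubleton_eq_iff)

lemma connected_shifted:
  assumes "connected_graph n E"
  shows "connected_graph n shifted"
proof -
  have adj: "(a, b) \<in> adj_rel shifted" "(b, a) \<in> adj_rel shifted" if "{a, b} \<in> shifted" for a b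
    using that by (auto simp: adj_rel_def insert_commute)
  have sub: "adj_rel E \<subseteq> (adj_rel shifted)\<^sup>*"
  proof
    fix p assume "p \<in> adj_rel E"
    then obtain a b where p: "p = (a, b)" "{a, b} \<in> E" by (auto simp: adj_rel_def)
    show "p \<in> (adj_rel shifted)\<^sup>*"
    proof (cases "{a, b} \<in> shifted")
      case True
      then show ?thesis using adj p by blast
    next
      case False
      \<comment> \<open>the edge between y and a moved vertex u is replaced by the path y, w, u\<close>
      then obtain u where u: "u \<in> moved" "{a, b} = {y, u}" using p unfolding shifted_def by blast
      then have "{w, u} \<in> shifted" unfolding shifted_def by blast
      then have "(y, w) \<in> adj_rel shifted" "(w, u) \<in> adj_rel shifted"
        "(u, w) \<in> adj_rel shifted" "(w, y) \<in> adj_rel shifted"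
        using adj edge_shifted by blast+
      then have "(y, u) \<in> (adj_rel shifted)\<^sup>*" "(u, y) \<in> (adj_rel shifted)\<^sup>*"
        by (meson r_into_rtrancl rtrancl_into_rtrancl)+
      then show ?thesis using u p by (auto simp: doubleton_eq_iff)
    qed
  qed
  then show ?thesis
    using assms rtrancl_subset_rtrancl[OF sub] unfolding connected_graph_def by blast
qed

lemma nbr_shifted_w: "nbr shifted w = nbr E w \<union> moved"
proof -
  have "{w, u} \<notin> (\<lambda>v. {y, v}) ` moved" for u
    using w_notin_moved w_neq_y by (auto simp: doubleton_eq_iff)
  moreover have "{w, u} \<in> (\<lambda>v. {w, v}) ` moved \<longleftrightarrow> u \<in> moved" for u
    by (auto simp: doubleton_eq_iff)
  ultimately show ?thesis unfolding nbr_def shifted_def by (intro set_eqI) simp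
qed

lemma nbr_shifted_y: "nbr shifted y = nbr E y - moved"
proof -
  have "{y, u} \<notin> (\<lambda>v. {w, v}) ` moved" for u
    using y_notin_moved w_neq_y by (auto simp: doubleton_eq_iff)
  moreover have "{y, u} \<in> (\<lambda>v. {y, v}) ` moved \<longleftrightarrow> u \<in> moved" for u
    by (auto simp: doubleton_eq_iff)
  ultimately show ?thesis unfolding nbr_def shifted_def by (intro set_eqI) simp
qed

lemma nbr_shifted_moved:
  assumes "u \<in> moved"
  shows "nbr shifted u = insert w (nbr E u - {y})"
proof -
  have "{u, x} \<in> (\<lambda>v. {y, v}) ` moved \<longleftrightarrow> x = y" "{u, x} \<in> (\<lambda>v. {w, v}) ` moved \<longleftrightarrow> x = w" for x
    using assms movedD[OF assms] by (auto simp: doubleton_eq_iff)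
  then show ?thesis unfolding nbr_def shifted_def by (intro set_eqI) auto
qed

lemma nbr_shifted_other:
  assumes "v \<notin> insert w (insert y moved)"
  shows "nbr shifted v = nbr E v"
proof -
  have "{v, x} \<notin> (\<lambda>u. {y, u}) ` moved" "{v, x} \<notin> (\<lambda>u. {w, u}) ` moved" for x
    using assms by (auto simp: doubleton_eq_iff)
  then show ?thesis unfolding nbr_def shifted_def by (intro set_eqI) simp
qed

lemma deg_shifted_w: "deg shifted w = deg E w + card moved"
proof -
  have "nbr E w \<inter> moved = {}" by (auto simp: moved_def)
  then show ?thesis
    using finite_nbr[OF simple] finite_moved
    by (simp add: deg_eq_card_nbr[OF simple] deg_eq_card_nbr[OF simple_shifted] nbr_shifted_w card_Un_disjoint)
qed

lemma deg_shifted_y: "deg shifted y + card moved = deg E y"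
proof -
  have "moved \<subseteq> nbr E y" by (auto simp: moved_def)
  then have "card (nbr E y - moved) = card (nbr E y) - card moved" "card moved \<le> card (nbr E y)"
    using finite_moved finite_nbr[OF simple] by (simp_all add: card_Diff_subset card_mono)
  then show ?thesis
    by (simp add: deg_eq_card_nbr[OF simple] deg_eq_card_nbr[OF simple_shifted] nbr_shifted_y)
qed

lemma deg_shifted_other:
  assumes "v \<noteq> w" "v \<noteq> y"
  shows "deg shifted v = deg E v"
proof (cases "v \<in> moved")
  case True
  \<comment> \<open>a moved vertex trades its neighbour y for w\<close>
  then have "y \<in> nbr E v" "w \<notin> nbr E v" using movedD[of v] by (auto simp: nbr_def insert_commute)
  moreover have "0 < card (nbr E v)"
    using calculation(1) finite_nbr[OF simple, of v] by (auto simp: card_gt_0_iff)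
  ultimately show ?thesis
    using True finite_nbr[OF simple, of v] w_neq_y
    by (simp add: deg_eq_card_nbr[OF simple] deg_eq_card_nbr[OF simple_shifted] nbr_shifted_moved
        Suc_pred)
qed (use assms in \<open>simp add: deg_eq_card_nbr[OF simple] deg_eq_card_nbr[OF simple_shifted]
       nbr_shifted_other\<close>)

lemma deg_le_deg_shifted_w: "deg E y \<le> deg shifted w"
proof -
  have fin: "finite (nbr E w)" using finite_nbr[OF simple] .
  have "y \<in> nbr E w" using edge by (simp add: nbr_def)
  have "nbr E y \<subseteq> insert w (moved \<union> (nbr E w - {y}))"
    using self_notin_nbr[OF simple, of y] by (auto simp: moved_def)
  then have "card (nbr E y) \<le> card (insert w (moved \<union> (nbr E w - {y})))"
    using fin finite_moved by (intro card_mono) auto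
  also have "\<dots> \<le> Suc (card (moved \<union> (nbr E w - {y})))"
    using fin finite_moved by (simp add: card_insert_if)
  also have "\<dots> \<le> Suc (card moved + card (nbr E w - {y}))"
    using card_Un_le by simp
  also have "\<dots> = card moved + card (nbr E w)"
  proof -
    have "0 < card (nbr E w)" using fin \<open>y \<in> nbr E w\<close> by (auto simp: card_gt_0_iff)
    then show ?thesis using fin \<open>y \<in> nbr E w\<close> by (simp add: Suc_pred)
  qed
  finally show ?thesis
    by (simp add: deg_eq_card_nbr[OF simple] deg_shifted_w)
qed

lemma chi_eq_parts:
  "chi \<alpha> E = (\<Sum>e\<in>{e \<in> E. w \<notin> e \<and> y \<notin> e}. pw \<alpha> (\<Sum>x\<in>e. deg E x)) + pw \<alpha> (deg E w + deg E y)
    + ((\<Sum>u\<in>nbr E w - {y}. pw \<alpha> (deg E w + deg E u)) + (\<Sum>u\<in>nbr E y \<inter> nbr E w. pw \<alpha> (deg E y + deg E u)))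
    + (\<Sum>u\<in>moved. pw \<alpha> (deg E y + deg E u))"
proof -
  have "nbr E y - {w} = (nbr E y \<inter> nbr E w) \<union> moved" "(nbr E y \<inter> nbr E w) \<inter> moved = {}"
    using self_notin_nbr[OF simple, of w] by (auto simp: moved_def)
  then show ?thesis
    unfolding chi_split_at_edge[OF simple edge] using finite_nbr[OF simple] finite_moved
    by (simp add: sum.union_disjoint)
qed

lemma chi_shifted_eq_parts:
  "chi \<alpha> shifted = (\<Sum>e\<in>{e \<in> E. w \<notin> e \<and> y \<notin> e}. pw \<alpha> (\<Sum>x\<in>e. deg E x)) + pw \<alpha> (deg E w + deg E y)
    + ((\<Sum>u\<in>nbr E w - {y}. pw \<alpha> (deg shifted w + deg E u))
      + (\<Sum>u\<in>nbr E y \<inter> nbr E w. pw \<alpha> (deg shifted y + deg E u)))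
    + (\<Sum>u\<in>moved. pw \<alpha> (deg shifted w + deg E u))"
proof -
  let ?X = "{e \<in> E. w \<notin> e \<and> y \<notin> e}"
  have nbr: "nbr shifted w - {y} = (nbr E w - {y}) \<union> moved" "(nbr E w - {y}) \<inter> moved = {}"
    "nbr shifted y - {w} = nbr E y \<inter> nbr E w"
    using y_notin_moved self_notin_nbr[OF simple, of w] by (auto simp: nbr_shifted_w nbr_shifted_y moved_def)
  have same_deg: "deg shifted u = deg E u" if "u \<in> (nbr E w - {y}) \<union> moved \<union> (nbr E y \<inter> nbr E w)" for u
    using that w_notin_moved y_notin_moved self_notin_nbr[OF simple] by (intro deg_shifted_other) auto
  have "{e \<in> shifted. w \<notin> e \<and> y \<notin> e} = ?X" by (auto simp: shifted_def)
  moreover have "(\<Sum>x\<in>e. deg shifted x) = (\<Sum>x\<in>e. deg E x)" if "e \<in> ?X" for e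
    using that by (intro sum.cong refl deg_shifted_other) auto
  ultimately have rest: "(\<Sum>e\<in>{e \<in> shifted. w \<notin> e \<and> y \<notin> e}. pw \<alpha> (\<Sum>x\<in>e. deg shifted x))
      = (\<Sum>e\<in>?X. pw \<alpha> (\<Sum>x\<in>e. deg E x))" by simp
  have "deg shifted w + deg shifted y = deg E w + deg E y" using deg_shifted_w deg_shifted_y by arith
  then show ?thesis
    unfolding chi_split_at_edge[OF simple_shifted edge_shifted] nbr(1,3) rest
    using finite_nbr[OF simple] finite_moved nbr(2) same_deg by (simp add: sum.union_disjoint)
qed

lemma chi_le_chi_shifted:
  assumes "1 \<le> \<alpha>"
  shows "chi \<alpha> E \<le> chi \<alpha> shifted"
proof -
  let ?d = "deg E" and ?d' = "deg shifted"
  have "(\<Sum>u\<in>nbr E w - {y}. pw \<alpha> (?d w + ?d u)) + (\<Sum>u\<in>nbr E y \<inter> nbr E w. pw \<alpha> (?d y + ?d u))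
      \<le> (\<Sum>u\<in>nbr E w - {y}. pw \<alpha> (?d' w + ?d u)) + (\<Sum>u\<in>nbr E y \<inter> nbr E w. pw \<alpha> (?d' y + ?d u))"
  proof (rule pw_sum_exchange_le[OF assms])
    have "w \<in> nbr shifted y" using edge_shifted by (simp add: nbr_def insert_commute)
    then show "0 < ?d' y"
      using finite_nbr[OF simple_shifted] by (auto simp: deg_eq_card_nbr[OF simple_shifted] card_gt_0_iff)
  qed (use finite_nbr[OF simple] self_notin_nbr[OF simple, of y] deg_shifted_w deg_shifted_y
      deg_le_deg_shifted_w in auto)
  moreover have "(\<Sum>u\<in>moved. pw \<alpha> (?d y + ?d u)) \<le> (\<Sum>u\<in>moved. pw \<alpha> (?d' w + ?d u))"
    using assms deg_le_deg_shifted_w by (intro sum_mono pw_mono) auto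
  ultimately show ?thesis unfolding chi_eq_parts chi_shifted_eq_parts by linarith
qed

end

lemma exists_dominating_graph:
  assumes "1 \<le> \<alpha>" "simple_graph n E" "connected_graph n E" "w < n"
  obtains E' where "simple_graph n E'" "card E' = card E" "\<forall>v<n. v \<noteq> w \<longrightarrow> {w, v} \<in> E'"
    "chi \<alpha> E \<le> chi \<alpha> E'"
proof -
  have "\<exists>E'. simple_graph n E' \<and> card E' = card E \<and> (\<forall>v<n. v \<noteq> w \<longrightarrow> {w, v} \<in> E')
      \<and> chi \<alpha> E \<le> chi \<alpha> E'"
    using assms(2,3)
  proof (induction "card E - deg E w" arbitrary: E rule: less_induct)
    case less
    show ?case
    proof (cases "\<forall>v<n. v \<noteq> w \<longrightarrow> {w, v} \<in> E")
      case False
      then obtain v where "v < n" "v \<noteq> w" "{w, v} \<notin> E" by blast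
      then obtain y z where yz: "{w, y} \<in> E" "{y, z} \<in> E" "z \<noteq> w" "{w, z} \<notin> E"
        using connected_graph_exists_private_nbr[OF less.prems(2) assms(4)] by blast
      interpret kelmans n E w y using less.prems(1) yz(1) by unfold_locales
      have "z \<in> moved" using yz by (auto simp: moved_def nbr_def)
      then have "deg E w < deg shifted w"
        using finite_moved by (auto simp: deg_shifted_w card_gt_0_iff)
      moreover have "deg shifted w \<le> card shifted"
        using deg_le_card[OF simple_graph_finite[OF simple_shifted]] .
      ultimately have "card shifted - deg shifted w < card E - deg E w"
        using card_shifted by linarith
      then obtain E' where "simple_graph n E'" "card E' = card shifted"
        "\<forall>v<n. v \<noteq> w \<longrightarrow> {w, v} \<in> E'" "chi \<alpha> shifted \<le> chi \<alpha> E'"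
        using less.hyps simple_shifted connected_shifted[OF less.prems(2)] by blast
      then show ?thesis
        using card_shifted chi_le_chi_shifted[OF assms(1)] by (intro exI[of _ E']) auto
    qed (use less.prems in blast)
  qed
  then show ?thesis using that by blast
qed

section \<open>Graphs with a dominating vertex\<close>

definition leaf_graph :: "nat \<Rightarrow> nat set set \<Rightarrow> bool" where
  "leaf_graph n H \<longleftrightarrow> simple_graph n H \<and> (\<forall>e\<in>H. 0 \<notin> e)"

definition chi_leaf_edges :: "real \<Rightarrow> nat set set \<Rightarrow> real" where
  "chi_leaf_edges \<alpha> H = (\<Sum>e\<in>H. pw \<alpha> (\<Sum>x\<in>e. Suc (deg H x)))"

lemma star_eq_image: "star n = (\<lambda>i. {0, i}) ` {0<..<n}"
  unfolding star_def by auto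

lemma card_star: "card (star n) = n - 1"
  unfolding star_eq_image by (simp add: card_image[OF inj_on_doubleton])

lemma simple_star: "simple_graph n (star n)"
  by (force simp: simple_graph_def star_def)

lemma star_union_disjoint: "leaf_graph n H \<Longrightarrow> star n \<inter> H = {}"
  unfolding leaf_graph_def star_def by auto

lemma simple_star_union: "leaf_graph n H \<Longrightarrow> simple_graph n (star n \<union> H)"
  unfolding leaf_graph_def by (intro simple_graph_Un simple_star) auto

lemma card_star_union: "leaf_graph n H \<Longrightarrow> card (star n \<union> H) = n - 1 + card H"
  using star_union_disjoint simple_graph_finite[of n H] simple_graph_finite[OF simple_star]
  by (simp add: leaf_graph_def card_Un_disjoint card_star)

lemma conn_k_cyclic_star_union:
  assumes "leaf_graph n H" "0 < n"
  shows "conn_k_cyclic k n (star n \<union> H) \<longleftrightarrow> card H = k"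
proof -
  have "connected_graph n (star n \<union> H)"
    using assms(2) by (intro connected_graph_if_dominating[of 0]) (auto simp: star_def)
  then show ?thesis
    using assms simple_star_union card_star_union by (auto simp: conn_k_cyclic_def)
qed

lemma dominated_graph_eq_star_union:
  assumes "simple_graph n E" "\<forall>v<n. v \<noteq> 0 \<longrightarrow> {0, v} \<in> E"
  shows "E = star n \<union> {e \<in> E. 0 \<notin> e}" "leaf_graph n {e \<in> E. 0 \<notin> e}"
proof -
  have "nbr E 0 \<subseteq> {0<..<n}"
  proof
    fix t assume t: "t \<in> nbr E 0"
    have "t \<noteq> 0"
    proof
      assume "t = 0"
      with t self_notin_nbr[OF assms(1), of 0] show False by simp
    qed
    with t show "t \<in> {0<..<n}" using nbr_subset[OF assms(1), of 0] by auto
  qed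
  then have "{e \<in> E. 0 \<in> e} \<subseteq> star n"
    unfolding edges_at_eq_image_nbr[OF assms(1)] star_eq_image by (rule image_mono)
  moreover have "star n \<subseteq> E" using assms(2) by (auto simp: star_def)
  ultimately show "E = star n \<union> {e \<in> E. 0 \<notin> e}" by blast
  show "leaf_graph n {e \<in> E. 0 \<notin> e}"
    using simple_graph_subset[OF assms(1), of "{e \<in> E. 0 \<notin> e}"] by (auto simp: leaf_graph_def)
qed

lemma doubleton_mem_star: "{a, b} \<in> star n \<longleftrightarrow> (a = 0 \<and> 0 < b \<and> b < n) \<or> (b = 0 \<and> 0 < a \<and> a < n)"
  unfolding star_def by (auto simp: doubleton_eq_iff)

lemma sum_star: "(\<Sum>e\<in>star n. f e) = (\<Sum>v\<in>{0<..<n}. f {0, v})"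
  unfolding star_eq_image by (rule sum.reindex[OF inj_on_doubleton, unfolded comp_def])

lemma leaf_graph_vertex:
  assumes "leaf_graph n H" "e \<in> H" "x \<in> e"
  shows "0 < x" "x < n"
proof -
  have simple: "simple_graph n H" and "0 \<notin> e" using assms(1,2) unfolding leaf_graph_def by auto
  obtain a b where "e = {a, b}" "a \<noteq> b" "a < n" "b < n" using simple_graph_edgeE[OF simple assms(2)] .
  with assms(3) \<open>0 \<notin> e\<close> show "0 < x" "x < n" by (cases "x = 0"; auto)+
qed

lemma nbr_Un: "nbr (E \<union> F) v = nbr E v \<union> nbr F v"
  by (auto simp: nbr_def)

lemma nbr_star_center: "nbr (star n) 0 = {0<..<n}"
  by (auto simp: nbr_def doubleton_mem_star)

lemma nbr_star_leaf: "0 < v \<Longrightarrow> v < n \<Longrightarrow> nbr (star n) v = {0}"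
  by (auto simp: nbr_def doubleton_mem_star)

lemma zero_notin_nbr_leaf_graph: "leaf_graph n H \<Longrightarrow> 0 \<notin> nbr H v"
  by (auto simp: nbr_def leaf_graph_def)

lemma nbr_leaf_graph_zero: "leaf_graph n H \<Longrightarrow> nbr H 0 = {}"
  by (auto simp: nbr_def leaf_graph_def)

lemma deg_star_union_center:
  assumes "leaf_graph n H"
  shows "deg (star n \<union> H) 0 = n - 1"
  using assms by (simp add: deg_eq_card_nbr[OF simple_star_union[OF assms]] nbr_Un nbr_star_center
      nbr_leaf_graph_zero)

lemma deg_star_union_leaf:
  assumes "leaf_graph n H" "0 < v" "v < n"
  shows "deg (star n \<union> H) v = Suc (deg H v)"
proof -
  have simple: "simple_graph n H" using assms(1) by (simp add: leaf_graph_def)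
  then show ?thesis
    using assms finite_nbr[OF simple] zero_notin_nbr_leaf_graph[OF assms(1)]
    by (simp add: deg_eq_card_nbr[OF simple_star_union[OF assms(1)]] deg_eq_card_nbr[OF simple]
        nbr_Un nbr_star_leaf)
qed

lemma chi_star_union:
  assumes "leaf_graph n H" "0 < n"
  shows "chi \<alpha> (star n \<union> H) = (\<Sum>v\<in>{0<..<n}. pw \<alpha> (n + deg H v)) + chi_leaf_edges \<alpha> H"
proof -
  let ?G = "star n \<union> H"
  have fin: "finite H" using assms(1) simple_graph_finite by (auto simp: leaf_graph_def)
  have "chi \<alpha> ?G = (\<Sum>e\<in>star n. pw \<alpha> (\<Sum>x\<in>e. deg ?G x)) + (\<Sum>e\<in>H. pw \<alpha> (\<Sum>x\<in>e. deg ?G x))"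
    unfolding chi_pw
    by (rule sum.union_disjoint[OF simple_graph_finite[OF simple_star] fin star_union_disjoint[OF assms(1)]])
  also have "(\<Sum>e\<in>star n. pw \<alpha> (\<Sum>x\<in>e. deg ?G x)) = (\<Sum>v\<in>{0<..<n}. pw \<alpha> (n + deg H v))"
    unfolding sum_star
    using assms by (intro sum.cong refl) (simp add: deg_star_union_center deg_star_union_leaf)
  also have "(\<Sum>e\<in>H. pw \<alpha> (\<Sum>x\<in>e. deg ?G x)) = chi_leaf_edges \<alpha> H"
    unfolding chi_leaf_edges_def
    by (intro sum.cong refl arg_cong[where f = "pw \<alpha>"] deg_star_union_leaf[OF assms(1)]
        leaf_graph_vertex[OF assms(1)])
  finally show ?thesis .
qed

lemma exists_star_union_ge:
  assumes "1 \<le> \<alpha>" "conn_k_cyclic k n E" "0 < n"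
  obtains H where "leaf_graph n H" "card H = k" "chi \<alpha> E \<le> chi \<alpha> (star n \<union> H)"
proof -
  have simple: "simple_graph n E" and connected: "connected_graph n E"
    using assms(2) by (simp_all add: conn_k_cyclic_def)
  obtain E' where E': "simple_graph n E'" "card E' = card E" "\<forall>v<n. v \<noteq> 0 \<longrightarrow> {0, v} \<in> E'"
    "chi \<alpha> E \<le> chi \<alpha> E'"
    by (rule exists_dominating_graph[OF assms(1) simple connected assms(3)])
  let ?H = "{e \<in> E'. 0 \<notin> e}"
  note star_union = dominated_graph_eq_star_union[OF E'(1,3)]
  have E'_eq: "star n \<union> ?H = E'" using star_union(1) by (rule sym)
  have "card E' = n - 1 + card ?H" using card_star_union[OF star_union(2)] unfolding E'_eq .
  moreover have "card E + 1 = n + k" using assms(2) by (simp add: conn_k_cyclic_def)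
  ultimately have "card ?H = k" using E'(2) assms(3) by linarith
  moreover have "chi \<alpha> E \<le> chi \<alpha> (star n \<union> ?H)" using E'(4) unfolding E'_eq .
  ultimately show ?thesis by (rule that[OF star_union(2)])
qed

section \<open>Layer profiles\<close>

lemma of_nat_mult_right_mono: "p \<le> q \<Longrightarrow> 0 \<le> d \<Longrightarrow> of_nat p * d \<le> of_nat q * (d :: real)"
  by (intro mult_right_mono) auto

lemma sum_layer_cake:
  fixes g :: "nat \<Rightarrow> 'a::comm_ring_1"
  assumes "finite V" "\<And>v. v \<in> V \<Longrightarrow> h v \<le> m"
  shows "(\<Sum>v\<in>V. g (h v))
    = of_nat (card V) * g 0 + (\<Sum>j<m. of_nat (card {v \<in> V. j < h v}) * (g (Suc j) - g j))"
proof -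
  have "g (h v) = g 0 + (\<Sum>j<m. if j < h v then g (Suc j) - g j else 0)" if "v \<in> V" for v
  proof -
    have "{..<m} \<inter> {j. j < h v} = {..<h v}" using assms(2)[OF that] by auto
    then have "(\<Sum>j<m. if j < h v then g (Suc j) - g j else 0) = (\<Sum>j<h v. g (Suc j) - g j)"
      by (simp add: sum.If_cases)
    then show ?thesis by (simp add: sum_lessThan_telescope)
  qed
  then have "(\<Sum>v\<in>V. g (h v)) = (\<Sum>v\<in>V. g 0 + (\<Sum>j<m. if j < h v then g (Suc j) - g j else 0))"
    by (rule sum.cong[OF refl])
  also have "\<dots> = of_nat (card V) * g 0 + (\<Sum>v\<in>V. \<Sum>j<m. if j < h v then g (Suc j) - g j else 0)"
    by (simp add: sum.distrib)
  also have "(\<Sum>v\<in>V. \<Sum>j<m. if j < h v then g (Suc j) - g j else 0)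
      = (\<Sum>j<m. of_nat (card {v \<in> V. j < h v}) * (g (Suc j) - g j))"
    by (subst sum.swap) (use assms(1) in \<open>simp add: sum.If_cases Int_def\<close>)
  finally show ?thesis .
qed

text \<open>As a function of j, the conjugate partition of the degree sequence of H.\<close>

definition layer :: "nat set set \<Rightarrow> nat \<Rightarrow> nat \<Rightarrow> nat" where
  "layer H n j = card {v \<in> {0<..<n}. j < deg H v}"

lemma chi_star_union_layers:
  assumes "leaf_graph n H" "0 < n"
  shows "chi \<alpha> (star n \<union> H)
    = real (n - 1) * pw \<alpha> n + (\<Sum>j<card H. real (layer H n j) * dpw \<alpha> (n + j)) + chi_leaf_edges \<alpha> H"
proof -
  have "finite H" using assms(1) simple_graph_finite by (auto simp: leaf_graph_def)
  then have "(\<Sum>v\<in>{0<..<n}. pw \<alpha> (n + deg H v))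
      = real (n - 1) * pw \<alpha> n + (\<Sum>j<card H. real (layer H n j) * dpw \<alpha> (n + j))"
    using sum_layer_cake[of "{0<..<n}" "deg H" "card H" "\<lambda>j. pw \<alpha> (n + j)"] deg_le_card
    by (simp add: layer_def dpw_def)
  then show ?thesis using chi_star_union[OF assms] by simp
qed

lemma sum_layer:
  assumes "leaf_graph n H"
  shows "(\<Sum>j<card H. layer H n j) = 2 * card H"
proof -
  have simple: "simple_graph n H" using assms by (simp add: leaf_graph_def)
  have "int (\<Sum>v\<in>{0<..<n}. deg H v) = int (\<Sum>j<card H. layer H n j)"
    using sum_layer_cake[of "{0<..<n}" "deg H" "card H" int] deg_le_card[OF simple_graph_finite[OF simple]]
    by (simp add: layer_def)
  moreover have "(\<Sum>v\<in>{0<..<n}. deg H v) = (\<Sum>v<n. deg H v)"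
    using deg_eq_card_nbr[OF simple, of 0] nbr_leaf_graph_zero[OF assms]
    by (intro sum.mono_neutral_left) auto
  ultimately show ?thesis using sum_deg_eq_twice_card[OF simple] by linarith
qed

lemma layer_antimono: "i \<le> j \<Longrightarrow> layer H n j \<le> layer H n i"
  unfolding layer_def by (intro card_mono) auto

lemma layer_le: "layer H n j \<le> n - 1"
  unfolding layer_def by (rule order_trans[OF card_mono[of "{0<..<n}"]]) auto

lemma layer_le_one:
  assumes "leaf_graph n H" "card H \<le> i + j" "0 < layer H n i"
  shows "layer H n j \<le> 1"
proof (rule ccontr)
  let ?S = "{v \<in> {0<..<n}. j < deg H v}"
  assume "\<not> layer H n j \<le> 1"
  then have "1 < card ?S" by (simp add: layer_def)
  obtain x where x: "x \<in> {0<..<n}" "i < deg H x"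
    using assms(3) card_gt_0_iff[of "{v \<in> {0<..<n}. i < deg H v}"] by (auto simp: layer_def)
  have "?S - {x} \<noteq> {}"
  proof
    assume "?S - {x} = {}"
    then have "?S \<subseteq> {x}" by blast
    then have "card ?S \<le> 1" using card_mono[of "{x}" ?S] by simp
    with \<open>1 < card ?S\<close> show False by simp
  qed
  then obtain y where "y \<in> {0<..<n}" "j < deg H y" "y \<noteq> x" by blast
  then have "deg H x + deg H y \<le> card H + 1"
    using assms(1) by (intro deg_add_deg_le[of n]) (auto simp: leaf_graph_def)
  with x \<open>j < deg H y\<close> assms(2) show False by linarith
qed

lemma layer_le_one_self: "leaf_graph n H \<Longrightarrow> card H \<le> 2 * j \<Longrightarrow> layer H n j \<le> 1"
  using layer_le_one[of n H j j] by (cases "layer H n j") auto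

lemma chi_leaf_edges_le:
  assumes "0 \<le> \<alpha>" "leaf_graph n H"
  shows "chi_leaf_edges \<alpha> H \<le> card H * pw \<alpha> (card H + 3)"
proof -
  have simple: "simple_graph n H" using assms(2) by (simp add: leaf_graph_def)
  have bound: "pw \<alpha> (\<Sum>x\<in>e. Suc (deg H x)) \<le> pw \<alpha> (card H + 3)" if e: "e \<in> H" for e
  proof -
    obtain u v where "e = {u, v}" "u \<noteq> v" "u < n" "v < n" using simple_graph_edgeE[OF simple e] .
    moreover have "deg H u + deg H v \<le> card H + 1"
      using deg_add_deg_le[OF simple \<open>u \<noteq> v\<close>] .
    ultimately show ?thesis using assms(1) by (intro pw_mono) auto
  qed
  show ?thesis
    unfolding chi_leaf_edges_def using bound by (rule sum_bounded_above)
qed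

lemma chi_star_union_le:
  assumes "leaf_graph n H" "leaf_graph n X" "0 < n" "card H = card X"
    and "(\<Sum>j<card X. real (layer H n j) * dpw \<alpha> (n + j)) \<le> (\<Sum>j<card X. real (layer X n j) * dpw \<alpha> (n + j))"
    and "chi_leaf_edges \<alpha> H \<le> chi_leaf_edges \<alpha> X"
  shows "chi \<alpha> (star n \<union> H) \<le> chi \<alpha> (star n \<union> X)"
  using assms by (simp add: chi_star_union_layers)

lemma is_max_star_union:
  assumes "1 \<le> \<alpha>" "0 < n" "leaf_graph n X" "card X = k"
    and "\<And>H. leaf_graph n H \<Longrightarrow> card H = k \<Longrightarrow> chi \<alpha> (star n \<union> H) \<le> chi \<alpha> (star n \<union> X)"
  shows "is_max \<alpha> (conn_k_cyclic k n) (star n \<union> X)"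
  unfolding is_max_def
proof (intro conjI allI impI)
  show "conn_k_cyclic k n (star n \<union> X)" using assms(2-4) conn_k_cyclic_star_union by blast
  fix E assume "conn_k_cyclic k n E"
  then obtain H where "leaf_graph n H" "card H = k" "chi \<alpha> E \<le> chi \<alpha> (star n \<union> H)"
    using exists_star_union_ge[OF assms(1) _ assms(2)] by blast
  then show "chi \<alpha> E \<le> chi \<alpha> (star n \<union> X)" using assms(5) by fastforce
qed

lemma layer_sum_le_bicyclic:
  assumes "1 \<le> \<alpha>" "0 < n" "leaf_graph n H" "card H = 2"
  shows "(\<Sum>j<2. real (layer H n j) * dpw \<alpha> (n + j)) \<le> 3 * dpw \<alpha> n + dpw \<alpha> (n + 1)"
proof -
  let ?p = "layer H n" and ?D = "\<lambda>j. dpw \<alpha> (n + j)"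
  have "?p 0 + ?p 1 = 4" using sum_layer[OF assms(3)] assms(4) by (simp add: numeral_eq_Suc)
  then have "real (?p 0) * ?D 0 = (4 - real (?p 1)) * ?D 0" by (simp flip: of_nat_add)
  moreover have "real (?p 1) * (?D 1 - ?D 0) \<le> real 1 * (?D 1 - ?D 0)"
    using layer_le_one_self[OF assms(3), of 1] assms dpw_mono[of \<alpha> n "n + 1"]
    by (intro of_nat_mult_right_mono) auto
  ultimately show ?thesis by (simp add: numeral_eq_Suc algebra_simps)
qed

lemma layer_sum_le_tricyclic:
  assumes "1 \<le> \<alpha>" "0 < n" "leaf_graph n H" "card H = 3"
  shows "(\<Sum>j<3. real (layer H n j) * dpw \<alpha> (n + j))
    \<le> max (4 * dpw \<alpha> n + dpw \<alpha> (n + 1) + dpw \<alpha> (n + 2)) (3 * dpw \<alpha> n + 3 * dpw \<alpha> (n + 1))"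
proof -
  let ?p = "layer H n" and ?D = "\<lambda>j. dpw \<alpha> (n + j)"
  have sum: "?p 0 + ?p 1 + ?p 2 = 6" using sum_layer[OF assms(3)] assms(4) by (simp add: numeral_eq_Suc)
  have "?p 2 \<le> 1" using layer_le_one_self[OF assms(3), of 2] assms(4) by simp
  show ?thesis
  proof (cases "?p 2 = 0")
    case True
    have "?p 1 \<le> ?p 0" by (rule layer_antimono) simp
    with sum True have "?p 1 \<le> 3" by linarith
    then have "real (?p 1) * (?D 1 - ?D 0) \<le> real 3 * (?D 1 - ?D 0)"
      using assms dpw_mono[of \<alpha> n "n + 1"] by (intro of_nat_mult_right_mono) auto
    moreover have "real (?p 0) * ?D 0 = (6 - real (?p 1)) * ?D 0"
      using sum True by (simp flip: of_nat_add)
    ultimately have "(\<Sum>j<3. real (?p j) * ?D j) \<le> 3 * ?D 0 + 3 * ?D 1"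
      using True by (simp add: numeral_eq_Suc algebra_simps)
    then show ?thesis by simp
  next
    case False
    \<comment> \<open>a vertex of degree 3 in H leaves room for only one further vertex of degree at least 2\<close>
    have "?p 1 \<le> 1" using layer_le_one[OF assms(3), of 2 1] False assms(4) by simp
    moreover have "?p 2 \<le> ?p 1" by (rule layer_antimono) simp
    ultimately have "?p 0 = 4" "?p 1 = 1" "?p 2 = 1" using sum False \<open>?p 2 \<le> 1\<close> by linarith+
    then show ?thesis by (simp add: numeral_eq_Suc)
  qed
qed

lemma layer_sum_le_tetracyclic_without_degree_4:
  assumes "1 \<le> \<alpha>" "0 < n" "leaf_graph n H" "card H = 4" "layer H n 3 = 0"
  shows "(\<Sum>j<4. real (layer H n j) * dpw \<alpha> (n + j))
    \<le> 4 * dpw \<alpha> n + 3 * dpw \<alpha> (n + 1) + dpw \<alpha> (n + 2)"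
proof -
  let ?p = "layer H n" and ?D = "\<lambda>j. dpw \<alpha> (n + j)"
  have sum: "?p 0 + ?p 1 + ?p 2 = 8"
    using sum_layer[OF assms(3)] assms(4,5) by (simp add: numeral_eq_Suc)
  have "?p 2 \<le> 1" using layer_le_one_self[OF assms(3), of 2] assms(4) by simp
  moreover have "?p 1 \<le> ?p 0" by (rule layer_antimono) simp
  ultimately have "?p 1 + ?p 2 \<le> 4" using sum by linarith
  then have "real (?p 1 + ?p 2) * (?D 1 - ?D 0) \<le> real 4 * (?D 1 - ?D 0)"
    using assms dpw_mono[of \<alpha> n "n + 1"] by (intro of_nat_mult_right_mono) auto
  moreover have "real (?p 2) * (?D 2 - ?D 1) \<le> real 1 * (?D 2 - ?D 1)"
    using \<open>?p 2 \<le> 1\<close> assms dpw_mono[of \<alpha> "n + 1" "n + 2"] by (intro of_nat_mult_right_mono) auto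
  moreover have "real (?p 0) * ?D 0 = (8 - real (?p 1) - real (?p 2)) * ?D 0"
    using sum by (simp flip: of_nat_add)
  ultimately show ?thesis
    using assms(5) by (simp add: numeral_eq_Suc algebra_simps)
qed

lemma tetracyclic_layers_with_degree_4:
  assumes "leaf_graph n H" "card H = 4" "layer H n 3 \<noteq> 0"
  shows "layer H n 0 = 5" "layer H n 1 = 1" "layer H n 2 = 1" "layer H n 3 = 1"
proof -
  let ?p = "layer H n"
  have sum: "?p 0 + ?p 1 + ?p 2 + ?p 3 = 8"
    using sum_layer[OF assms(1)] assms(2) by (simp add: numeral_eq_Suc)
  have "?p 3 \<le> 1" using layer_le_one_self[OF assms(1), of 3] assms(2) by simp
  moreover have "?p 1 \<le> 1" using layer_le_one[OF assms(1), of 3 1] assms(2,3) by simp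
  moreover have "?p 3 \<le> ?p 2" "?p 2 \<le> ?p 1" by (rule layer_antimono, simp)+
  ultimately show "?p 0 = 5" "?p 1 = 1" "?p 2 = 1" "?p 3 = 1" using sum assms(3) by linarith+
qed

lemma layer_sum_le_tetracyclic:
  assumes "1 \<le> \<alpha>" "4 \<le> n" "leaf_graph n H" "card H = 4"
  shows "(\<Sum>j<4. real (layer H n j) * dpw \<alpha> (n + j))
    \<le> 5 * dpw \<alpha> n + dpw \<alpha> (n + 1) + dpw \<alpha> (n + 2) + dpw \<alpha> (n + 3)"
proof (cases "layer H n 3 = 0")
  case True
  then show ?thesis
    using layer_sum_le_tetracyclic_without_degree_4[OF assms(1) _ assms(3,4)] dpw_midpoint[OF assms(1,2)] assms(2)
    by fastforce
next
  case False
  then show ?thesis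
    using tetracyclic_layers_with_degree_4[OF assms(3,4)] by (simp add: numeral_eq_Suc)
qed

lemma card_leaf_edges_value_7_le_layers:
  assumes "leaf_graph n H" "layer H n 3 = 0"
  shows "card {e \<in> H. (\<Sum>x\<in>e. Suc (deg H x)) = 7} \<le> layer H n 2 * (layer H n 1 - layer H n 2)"
proof -
  define D3 where "D3 = {v \<in> {0<..<n}. 2 < deg H v}"
  define D2 where "D2 = {v \<in> {0<..<n}. 1 < deg H v} - D3"
  have simple: "simple_graph n H" using assms(1) by (simp add: leaf_graph_def)
  have "{v \<in> {0<..<n}. 3 < deg H v} = {}" using assms(2) by (simp add: layer_def)
  then have le3: "deg H v \<le> 3" if "v \<in> {0<..<n}" for v using that by auto
  \<comment> \<open>with all degrees at most 3, degree sum 5 forces degrees 3 and 2 at the two ends\<close>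
  have sub: "{e \<in> H. (\<Sum>x\<in>e. Suc (deg H x)) = 7} \<subseteq> (\<lambda>(a, b). {a, b}) ` (D3 \<times> D2)"
  proof
    fix e assume "e \<in> {e \<in> H. (\<Sum>x\<in>e. Suc (deg H x)) = 7}"
    then have e: "e \<in> H" "(\<Sum>x\<in>e. Suc (deg H x)) = 7" by auto
    obtain a b where ab: "e = {a, b}" "a \<noteq> b" "a < n" "b < n" using simple_graph_edgeE[OF simple e(1)] .
    then have "a \<in> {0<..<n}" "b \<in> {0<..<n}" using leaf_graph_vertex[OF assms(1) e(1)] by auto
    moreover have "deg H a + deg H b = 5" using e(2) ab by simp
    moreover have "deg H a \<le> 3" "deg H b \<le> 3" using le3 calculation(1,2) by auto
    ultimately have "a \<in> D3 \<and> b \<in> D2 \<or> b \<in> D3 \<and> a \<in> D2"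
      unfolding D3_def D2_def by auto
    then show "e \<in> (\<lambda>(a, b). {a, b}) ` (D3 \<times> D2)"
      unfolding ab by (auto simp: insert_commute)
  qed
  have fin: "finite (D3 \<times> D2)" by (simp add: D3_def D2_def)
  have "card {e \<in> H. (\<Sum>x\<in>e. Suc (deg H x)) = 7} \<le> card ((\<lambda>(a, b). {a, b}) ` (D3 \<times> D2))"
    using sub fin by (intro card_mono) auto
  also have "\<dots> \<le> card D3 * card D2"
    using card_image_le[OF fin] by (simp add: card_cartesian_product)
  also have "card D3 = layer H n 2" by (simp add: D3_def layer_def)
  also have "card D2 = layer H n 1 - layer H n 2"
    unfolding D2_def D3_def layer_def by (subst card_Diff_subset) auto
  finally show ?thesis .
qed

lemma card_leaf_edges_value_7_le:
  assumes "leaf_graph n H" "card H = 4" "layer H n 3 = 0" "layer H n 0 \<le> 4"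
  shows "card {e \<in> H. (\<Sum>x\<in>e. Suc (deg H x)) = 7} \<le> 2"
proof -
  let ?p = "layer H n"
  have "?p 0 + ?p 1 + ?p 2 = 8" using sum_layer[OF assms(1)] assms(2,3) by (simp add: numeral_eq_Suc)
  moreover have "?p 2 \<le> 1" using layer_le_one_self[OF assms(1), of 2] assms(2) by simp
  moreover have "?p 1 \<le> ?p 0" by (rule layer_antimono) simp
  ultimately have "?p 2 = 0 \<or> ?p 2 = 1 \<and> ?p 1 = 3" using assms(4) by linarith
  then show ?thesis using card_leaf_edges_value_7_le_layers[OF assms(1,3)] by auto
qed

lemma chi_leaf_edges_le_without_degree_4:
  assumes "0 \<le> \<alpha>" "leaf_graph n H" "card H = 4" "layer H n 3 = 0" "layer H n 0 \<le> 4"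
  shows "chi_leaf_edges \<alpha> H \<le> 2 * pw \<alpha> 7 + 2 * pw \<alpha> 6"
proof -
  let ?val = "\<lambda>e. \<Sum>x\<in>e. Suc (deg H x)"
  let ?S = "{e \<in> H. ?val e = 7}"
  have simple: "simple_graph n H" using assms(2) by (simp add: leaf_graph_def)
  have fin: "finite H" using simple_graph_finite[OF simple] .
  have val_le: "?val e \<le> 7" if e: "e \<in> H" for e
  proof -
    obtain a b where "e = {a, b}" "a \<noteq> b" "a < n" "b < n" using simple_graph_edgeE[OF simple e] .
    with deg_add_deg_le[OF simple \<open>a \<noteq> b\<close>] assms(3) show ?thesis by simp
  qed
  have c: "card ?S \<le> 2" using card_leaf_edges_value_7_le[OF assms(2-5)] .
  have "chi_leaf_edges \<alpha> H = (\<Sum>e\<in>?S. pw \<alpha> (?val e)) + (\<Sum>e\<in>H - ?S. pw \<alpha> (?val e))"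
    unfolding chi_leaf_edges_def using fin by (subst sum.subset_diff[of ?S]) auto
  also have "(\<Sum>e\<in>?S. pw \<alpha> (?val e)) = real (card ?S) * pw \<alpha> 7" by simp
  also have "(\<Sum>e\<in>H - ?S. pw \<alpha> (?val e)) \<le> real (card (H - ?S)) * pw \<alpha> 6"
  proof (intro sum_bounded_above pw_mono assms(1))
    fix e assume "e \<in> H - ?S"
    with val_le[of e] show "?val e \<le> 6" by auto
  qed
  also have "card (H - ?S) = 4 - card ?S" using fin assms(3) by (subst card_Diff_subset) auto
  finally have "chi_leaf_edges \<alpha> H \<le> 4 * pw \<alpha> 6 + real (card ?S) * (pw \<alpha> 7 - pw \<alpha> 6)"
    using c by (simp add: of_nat_diff algebra_simps)
  also have "\<dots> \<le> 4 * pw \<alpha> 6 + real 2 * (pw \<alpha> 7 - pw \<alpha> 6)"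
    using of_nat_mult_right_mono[OF c, of "pw \<alpha> 7 - pw \<alpha> 6"] pw_mono[OF assms(1), of 6 7] by simp
  finally show ?thesis by simp
qed

section \<open>The extremal graphs\<close>

lemma deg_empty: "deg {} v = 0"
  by (simp add: deg_def)

lemma deg_insert:
  assumes "finite X"
  shows "deg (insert e X) v = (if v \<in> e \<and> e \<notin> X then Suc (deg X v) else deg X v)"
proof -
  have "{e' \<in> insert e X. v \<in> e'} = (if v \<in> e then insert e {e' \<in> X. v \<in> e'} else {e' \<in> X. v \<in> e'})"
    by auto
  then show ?thesis using assms by (simp add: deg_def card_insert_if)
qed

lemma leaf_graph_empty: "leaf_graph n {}"
  by (simp add: leaf_graph_def simple_graph_def)

lemma leaf_graph_insert:
  "leaf_graph n X \<Longrightarrow> 0 < a \<Longrightarrow> a < n \<Longrightarrow> 0 < b \<Longrightarrow> b < n \<Longrightarrow> a \<noteq> b \<Longrightarrow> leaf_graph n (insert {a, b} X)"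
  unfolding leaf_graph_def simple_graph_def by auto

lemma layer_eq_sum_Union:
  assumes "leaf_graph n X"
  shows "layer X n j = (\<Sum>v\<in>\<Union>X. of_bool (j < deg X v))"
proof -
  have "{v \<in> {0<..<n}. j < deg X v} = {v \<in> \<Union>X. j < deg X v}"
  proof (intro Collect_cong iffI conjI)
    fix v assume "v \<in> {0<..<n} \<and> j < deg X v"
    then have "0 < card {e \<in> X. v \<in> e}" by (simp add: deg_def)
    then show "v \<in> \<Union>X" by (auto simp: card_gt_0_iff)
  qed (use leaf_graph_vertex[OF assms] in auto)
  moreover have "finite (\<Union>X)"
    using assms simple_graph_finite by (auto simp: leaf_graph_def simple_graph_def)
  ultimately show ?thesis by (simp add: layer_def sum.If_cases Int_def)
qed

lemma star_plus_edges:
  assumes "3 \<le> n"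
  defines "X \<equiv> {{1, 2}} :: nat set set"
  shows "leaf_graph n X" "card X = 1" "layer X n 0 = 2" "chi_leaf_edges \<alpha> X = pw \<alpha> 4"
proof -
  show leaf: "leaf_graph n X" unfolding X_def using assms by (intro leaf_graph_insert leaf_graph_empty) auto
  show "card X = 1" by (simp add: X_def)
  have "\<Union>X = {1, 2}" by (auto simp: X_def)
  then show "layer X n 0 = 2"
    unfolding layer_eq_sum_Union[OF leaf] by (simp add: X_def deg_insert deg_empty)
  show "chi_leaf_edges \<alpha> X = pw \<alpha> 4"
    by (simp add: chi_leaf_edges_def X_def deg_insert deg_empty numeral_eq_Suc)
qed

lemma B1_edges:
  assumes "4 \<le> n"
  defines "X \<equiv> {{1, 2}, {2, 3}} :: nat set set"
  shows "leaf_graph n X" "card X = 2"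
    "(\<Sum>j<2. real (layer X n j) * dpw \<alpha> (n + j)) = 3 * dpw \<alpha> n + dpw \<alpha> (n + 1)"
    "chi_leaf_edges \<alpha> X = 2 * pw \<alpha> 5"
proof -
  show leaf: "leaf_graph n X" unfolding X_def using assms by (intro leaf_graph_insert leaf_graph_empty) auto
  show "card X = 2" by (simp add: X_def doubleton_eq_iff)
  have "\<Union>X = {1, 2, 3}" by (auto simp: X_def)
  then show "(\<Sum>j<2. real (layer X n j) * dpw \<alpha> (n + j)) = 3 * dpw \<alpha> n + dpw \<alpha> (n + 1)"
    unfolding layer_eq_sum_Union[OF leaf] by (simp add: X_def deg_insert deg_empty doubleton_eq_iff numeral_eq_Suc)
  show "chi_leaf_edges \<alpha> X = 2 * pw \<alpha> 5"
    by (simp add: chi_leaf_edges_def X_def deg_insert deg_empty doubleton_eq_iff numeral_eq_Suc)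
qed

lemma G4_edges:
  assumes "5 \<le> n"
  defines "X \<equiv> {{1, 2}, {1, 3}, {1, 4}} :: nat set set"
  shows "leaf_graph n X" "card X = 3"
    "(\<Sum>j<3. real (layer X n j) * dpw \<alpha> (n + j)) = 4 * dpw \<alpha> n + dpw \<alpha> (n + 1) + dpw \<alpha> (n + 2)"
    "chi_leaf_edges \<alpha> X = 3 * pw \<alpha> 6"
proof -
  show leaf: "leaf_graph n X" unfolding X_def using assms by (intro leaf_graph_insert leaf_graph_empty) auto
  show "card X = 3" by (simp add: X_def doubleton_eq_iff)
  have "\<Union>X = {1, 2, 3, 4}" by (auto simp: X_def)
  then show "(\<Sum>j<3. real (layer X n j) * dpw \<alpha> (n + j)) = 4 * dpw \<alpha> n + dpw \<alpha> (n + 1) + dpw \<alpha> (n + 2)"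
    unfolding layer_eq_sum_Union[OF leaf] by (simp add: X_def deg_insert deg_empty doubleton_eq_iff numeral_eq_Suc)
  show "chi_leaf_edges \<alpha> X = 3 * pw \<alpha> 6"
    by (simp add: chi_leaf_edges_def X_def deg_insert deg_empty doubleton_eq_iff numeral_eq_Suc)
qed

lemma G5_edges:
  assumes "5 \<le> n"
  defines "X \<equiv> {{1, 2}, {2, 3}, {3, 1}} :: nat set set"
  shows "leaf_graph n X" "card X = 3"
    "(\<Sum>j<3. real (layer X n j) * dpw \<alpha> (n + j)) = 3 * dpw \<alpha> n + 3 * dpw \<alpha> (n + 1)"
    "chi_leaf_edges \<alpha> X = 3 * pw \<alpha> 6"
proof -
  show leaf: "leaf_graph n X" unfolding X_def using assms by (intro leaf_graph_insert leaf_graph_empty) auto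
  show "card X = 3" by (simp add: X_def doubleton_eq_iff)
  have "\<Union>X = {1, 2, 3}" by (auto simp: X_def)
  then show "(\<Sum>j<3. real (layer X n j) * dpw \<alpha> (n + j)) = 3 * dpw \<alpha> n + 3 * dpw \<alpha> (n + 1)"
    unfolding layer_eq_sum_Union[OF leaf] by (simp add: X_def deg_insert deg_empty doubleton_eq_iff numeral_eq_Suc)
  show "chi_leaf_edges \<alpha> X = 3 * pw \<alpha> 6"
    by (simp add: chi_leaf_edges_def X_def deg_insert deg_empty doubleton_eq_iff numeral_eq_Suc)
qed

lemma H4_edges:
  assumes "6 \<le> n"
  defines "X \<equiv> {{1, 2}, {1, 3}, {1, 4}, {1, 5}} :: nat set set"
  shows "leaf_graph n X" "card X = 4"
    "(\<Sum>j<4. real (layer X n j) * dpw \<alpha> (n + j))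
      = 5 * dpw \<alpha> n + dpw \<alpha> (n + 1) + dpw \<alpha> (n + 2) + dpw \<alpha> (n + 3)"
    "chi_leaf_edges \<alpha> X = 4 * pw \<alpha> 7"
proof -
  show leaf: "leaf_graph n X" unfolding X_def using assms by (intro leaf_graph_insert leaf_graph_empty) auto
  show "card X = 4" by (simp add: X_def doubleton_eq_iff)
  have "\<Union>X = {1, 2, 3, 4, 5}" by (auto simp: X_def)
  then show "(\<Sum>j<4. real (layer X n j) * dpw \<alpha> (n + j))
      = 5 * dpw \<alpha> n + dpw \<alpha> (n + 1) + dpw \<alpha> (n + 2) + dpw \<alpha> (n + 3)"
    unfolding layer_eq_sum_Union[OF leaf] by (simp add: X_def deg_insert deg_empty doubleton_eq_iff numeral_eq_Suc)
  show "chi_leaf_edges \<alpha> X = 4 * pw \<alpha> 7"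
    by (simp add: chi_leaf_edges_def X_def deg_insert deg_empty doubleton_eq_iff numeral_eq_Suc)
qed

lemma H5_edges:
  defines "X \<equiv> {{1, 2}, {2, 3}, {3, 1}, {1, 4}} :: nat set set"
  shows "leaf_graph 5 X" "card X = 4"
    "(\<Sum>j<4. real (layer X 5 j) * dpw \<alpha> (5 + j)) = 4 * dpw \<alpha> 5 + 3 * dpw \<alpha> 6 + dpw \<alpha> 7"
    "chi_leaf_edges \<alpha> X = 2 * pw \<alpha> 7 + 2 * pw \<alpha> 6"
proof -
  show leaf: "leaf_graph 5 X" unfolding X_def by (intro leaf_graph_insert leaf_graph_empty) auto
  show "card X = 4" by (simp add: X_def doubleton_eq_iff)
  have "\<Union>X = {1, 2, 3, 4}" by (auto simp: X_def)
  then show "(\<Sum>j<4. real (layer X 5 j) * dpw \<alpha> (5 + j)) = 4 * dpw \<alpha> 5 + 3 * dpw \<alpha> 6 + dpw \<alpha> 7"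
    unfolding layer_eq_sum_Union[OF leaf] by (simp add: X_def deg_insert deg_empty doubleton_eq_iff numeral_eq_Suc)
  show "chi_leaf_edges \<alpha> X = 2 * pw \<alpha> 7 + 2 * pw \<alpha> 6"
    by (simp add: chi_leaf_edges_def X_def deg_insert deg_empty doubleton_eq_iff numeral_eq_Suc)
qed

lemma is_max_tree:
  assumes "1 \<le> \<alpha>" "1 \<le> n"
  shows "is_max \<alpha> (is_tree n) (star n)"
proof -
  have "is_max \<alpha> (is_tree n) (star n \<union> {})"
  proof (rule is_max_star_union[OF assms(1) _ leaf_graph_empty])
    fix H assume "leaf_graph n H" "card H = 0"
    then have "H = {}" using simple_graph_finite by (auto simp: leaf_graph_def)
    then show "chi \<alpha> (star n \<union> H) \<le> chi \<alpha> (star n \<union> {})" by simp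
  qed (use assms in auto)
  then show ?thesis by simp
qed

lemma is_max_unicyclic:
  assumes "1 \<le> \<alpha>" "3 \<le> n"
  shows "is_max \<alpha> (unicyclic n) (star_plus n)"
  unfolding star_plus_def
proof (rule is_max_star_union[OF assms(1) _ star_plus_edges(1,2)[OF assms(2)]])
  fix H :: "nat set set" assume H: "leaf_graph n H" "card H = 1"
  have "layer H n 0 = 2" using sum_layer[OF H(1)] H(2) by simp
  then show "chi \<alpha> (star n \<union> H) \<le> chi \<alpha> (star n \<union> {{1, 2}})"
    using assms H star_plus_edges[OF assms(2)] chi_leaf_edges_le[of \<alpha> n H]
    by (intro chi_star_union_le) auto
qed (use assms in auto)

lemma is_max_bicyclic:
  assumes "1 \<le> \<alpha>" "4 \<le> n"
  shows "is_max \<alpha> (bicyclic n) (B1 n)"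
  unfolding B1_def
proof (rule is_max_star_union[OF assms(1) _ B1_edges(1,2)[OF assms(2)]])
  fix H :: "nat set set" assume H: "leaf_graph n H" "card H = 2"
  then show "chi \<alpha> (star n \<union> H) \<le> chi \<alpha> (star n \<union> {{1, 2}, {2, 3}})"
    using assms B1_edges[OF assms(2)] layer_sum_le_bicyclic[OF assms(1) _ H] chi_leaf_edges_le[of \<alpha> n H]
    by (intro chi_star_union_le) auto
qed (use assms in auto)

lemma tricyclic_G4_G5:
  assumes "5 \<le> n"
  shows "tricyclic n (G4 n)" "tricyclic n (G5 n)"
proof -
  have "0 < n" using assms by simp
  then show "tricyclic n (G4 n)" "tricyclic n (G5 n)" unfolding G4_def G5_def
    using conn_k_cyclic_star_union[OF G4_edges(1)[OF assms]] conn_k_cyclic_star_union[OF G5_edges(1)[OF assms]]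
      G4_edges(2)[OF assms] G5_edges(2)[OF assms] by blast+
qed

lemma chi_le_max_G4_G5:
  assumes "1 \<le> \<alpha>" "5 \<le> n" "tricyclic n E"
  shows "chi \<alpha> E \<le> max (chi \<alpha> (G4 n)) (chi \<alpha> (G5 n))"
proof -
  obtain H where H: "leaf_graph n H" "card H = 3" "chi \<alpha> E \<le> chi \<alpha> (star n \<union> H)"
    using exists_star_union_ge[OF assms(1,3)] assms(2) by auto
  have "chi \<alpha> (star n \<union> H) \<le> max (chi \<alpha> (G4 n)) (chi \<alpha> (G5 n))"
    using layer_sum_le_tricyclic[OF assms(1) _ H(1,2)] chi_leaf_edges_le[OF _ H(1), of \<alpha>] assms H(2)
      chi_star_union_layers[OF H(1)] G4_edges[OF assms(2)] G5_edges[OF assms(2)]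
      chi_star_union_layers[OF G4_edges(1)[OF assms(2)]] chi_star_union_layers[OF G5_edges(1)[OF assms(2)]]
    by (simp add: G4_def G5_def max_def split: if_splits)
  then show ?thesis using H(3) by linarith
qed

lemma chi_G4_minus_G5:
  assumes "5 \<le> n"
  obtains z where "0 < z" "chi \<alpha> (G4 n) - chi \<alpha> (G5 n) = \<alpha> * (\<alpha> - 1) * (\<alpha> - 2) * z powr (\<alpha> - 3)"
proof -
  have "chi \<alpha> (G4 n) - chi \<alpha> (G5 n) = dpw \<alpha> n - 2 * dpw \<alpha> (n + 1) + dpw \<alpha> (n + 2)"
    using assms G4_edges[OF assms] G5_edges[OF assms]
      chi_star_union_layers[OF G4_edges(1)[OF assms]] chi_star_union_layers[OF G5_edges(1)[OF assms]]
    by (simp add: G4_def G5_def)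
  with dpw_third_difference[of n \<alpha>] assms that show ?thesis by auto
qed

lemma chi_G4_vs_G5:
  assumes "5 \<le> n"
  shows "(1 < \<alpha> \<and> \<alpha> < 2 \<longrightarrow> chi \<alpha> (G4 n) < chi \<alpha> (G5 n))
    \<and> (\<alpha> > 2 \<longrightarrow> chi \<alpha> (G4 n) > chi \<alpha> (G5 n))
    \<and> (\<alpha> = 1 \<or> \<alpha> = 2 \<longrightarrow> chi \<alpha> (G4 n) = chi \<alpha> (G5 n))"
proof -
  obtain z where "0 < z" and diff: "chi \<alpha> (G4 n) - chi \<alpha> (G5 n) = \<alpha> * (\<alpha> - 1) * (\<alpha> - 2) * z powr (\<alpha> - 3)"
    using chi_G4_minus_G5[OF assms] .
  then have z: "0 < z powr (\<alpha> - 3)" by simp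
  show ?thesis
  proof (intro conjI impI)
    assume "1 < \<alpha> \<and> \<alpha> < 2"
    then have "\<alpha> * (\<alpha> - 1) * (\<alpha> - 2) * z powr (\<alpha> - 3) < 0"
      using z by (intro mult_neg_pos mult_pos_neg mult_pos_pos) auto
    with diff show "chi \<alpha> (G4 n) < chi \<alpha> (G5 n)" by linarith
  next
    assume "2 < \<alpha>"
    then have "0 < \<alpha> * (\<alpha> - 1) * (\<alpha> - 2) * z powr (\<alpha> - 3)"
      using z by (intro mult_pos_pos) auto
    with diff show "chi \<alpha> (G4 n) > chi \<alpha> (G5 n)" by linarith
  next
    assume "\<alpha> = 1 \<or> \<alpha> = 2"
    with diff show "chi \<alpha> (G4 n) = chi \<alpha> (G5 n)" by auto
  qed
qed

lemma is_max_tetracyclic: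
  assumes "1 \<le> \<alpha>" "6 \<le> n"
  shows "is_max \<alpha> (tetracyclic n) (H4 n)"
  unfolding H4_def
proof (rule is_max_star_union[OF assms(1) _ H4_edges(1,2)[OF assms(2)]])
  fix H :: "nat set set" assume H: "leaf_graph n H" "card H = 4"
  then show "chi \<alpha> (star n \<union> H) \<le> chi \<alpha> (star n \<union> {{1, 2}, {1, 3}, {1, 4}, {1, 5}})"
    using assms H4_edges[OF assms(2)] layer_sum_le_tetracyclic[OF assms(1) _ H] chi_leaf_edges_le[of \<alpha> n H]
    by (intro chi_star_union_le) auto
qed (use assms in auto)

lemma is_max_tetracyclic_5:
  assumes "1 \<le> \<alpha>"
  shows "is_max \<alpha> (tetracyclic 5) (H5 5)"
  unfolding H5_def
proof (rule is_max_star_union[OF assms(1) _ H5_edges(1,2)])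
  fix H :: "nat set set" assume H: "leaf_graph 5 H" "card H = 4"
  have "layer H 5 0 \<le> 4" using layer_le[of H 5 0] by simp
  then have "layer H 5 3 = 0" using tetracyclic_layers_with_degree_4[OF H] by force
  then show "chi \<alpha> (star 5 \<union> H) \<le> chi \<alpha> (star 5 \<union> {{1, 2}, {2, 3}, {3, 1}, {1, 4}})"
    using assms H H5_edges layer_sum_le_tetracyclic_without_degree_4[OF assms(1) _ H]
      chi_leaf_edges_le_without_degree_4[of \<alpha> 5 H] \<open>layer H 5 0 \<le> 4\<close>
    by (intro chi_star_union_le) auto
qed simp

theorem theorem6:
  fixes \<alpha> :: real
  assumes "\<alpha> \<ge> 1"
  shows "(\<forall>n\<ge>1. is_max \<alpha> (is_tree n) (star n))
       \<and> (\<forall>n\<ge>3. is_max \<alpha> (unicyclic n) (star_plus n))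
       \<and> (\<forall>n\<ge>4. is_max \<alpha> (bicyclic n) (B1 n))
       \<and> (\<forall>n\<ge>5. tricyclic n (G4 n) \<and> tricyclic n (G5 n)
            \<and> (\<forall>E. tricyclic n E \<longrightarrow> chi \<alpha> E \<le> max (chi \<alpha> (G4 n)) (chi \<alpha> (G5 n)))
            \<and> (1 < \<alpha> \<and> \<alpha> < 2 \<longrightarrow> chi \<alpha> (G4 n) < chi \<alpha> (G5 n))
            \<and> (\<alpha> > 2 \<longrightarrow> chi \<alpha> (G4 n) > chi \<alpha> (G5 n))
            \<and> (\<alpha> = 1 \<or> \<alpha> = 2 \<longrightarrow> chi \<alpha> (G4 n) = chi \<alpha> (G5 n)))
       \<and> (\<forall>n\<ge>6. is_max \<alpha> (tetracyclic n) (H4 n))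
       \<and> is_max \<alpha> (tetracyclic 5) (H5 5)"
  using assms is_max_tree is_max_unicyclic is_max_bicyclic tricyclic_G4_G5 chi_le_max_G4_G5
    chi_G4_vs_G5 is_max_tetracyclic is_max_tetracyclic_5
  by auto

end
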